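(* Let $X$ and $Y$ be independent nonnegative random variables with distributions $F$ and $G$, where $G$ is not the point mass at $0$, and let $H$ be the distribution of $XY$. If $F\in\mathcal S$ and $H\in\mathcal L$, then $H\in\mathcal S$.
   Context: For a distribution $V$, $\overline V=1-V$ denotes its tail. All limits are as $x\to\infty$, and $f(x)\sim g(x)$ means $f(x)/g(x)\to1$. A distribution $V$ is long-tailed, written $V\in\mathcal L$, if $\overline V(x)>0$ for all $x$ and $\overline V(x-t)\sim\overline V(x)$ for every real $t$. A distribution $V$ on $[0,\infty)$ is subexponential, written $V\in\mathcal S$, if $\overline V(x)>0$ for all $x$ and $\overline{V*V}(x)\sim 2\overline V(x)$, where $V*V$ is the distribution of the sum of two independent copies of a random variable with distribution $V$. *)

theory Defs
  imports "HOL-Probability.Probability" "HOL-Library.Landau_Symbols"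
begin

definition tail :: "real measure \<Rightarrow> real \<Rightarrow> real" where
  "tail V x = 1 - measure V {..x}"

definition long_tailed :: "real measure \<Rightarrow> bool" where
  "long_tailed V \<longleftrightarrow> real_distribution V \<and> (\<forall>x. tail V x > 0) \<and>
     (\<forall>t::real. (\<lambda>x. tail V (x - t)) \<sim>[at_top] (\<lambda>x. tail V x))"

definition subexponential :: "real measure \<Rightarrow> bool" where
  "subexponential V \<longleftrightarrow> real_distribution V \<and> measure V {..<0} = 0 \<and> (\<forall>x. tail V x > 0) \<and>
     (\<lambda>x. tail (V \<star> V) x) \<sim>[at_top] (\<lambda>x. 2 * tail V x)"

end

theory Submission
  imports Defs
begin

text \<open>Condition on the weights \<open>Y\<^sub>1, Y\<^sub>2\<close> in \<open>P(X\<^sub>1 Y\<^sub>1 + X\<^sub>2 Y\<^sub>2 > x)\<close>. For a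
  cutoff \<open>h\<close> this event lies in \<open>{X\<^sub>1 Y\<^sub>1 > x - h} \<union> {X\<^sub>2 Y\<^sub>2 > x - h}\<close> together with the event that
  both products exceed \<open>h\<close>. The first two have total probability \<open>2 H(x - h) \<sim> 2 H(x)\<close> because
  \<open>H\<close> is long-tailed. The remaining event has probability \<open>o(H(x))\<close>: distinguishing small, large
  and mixed weights, it is controlled by the two consequences of \<open>F \<in> S\<close> that
  \<open>P(X\<^sub>1 + X\<^sub>2 > t) \<le> C F(t)\<close> and \<open>P(X\<^sub>1 > s, X\<^sub>2 > s, X\<^sub>1 + X\<^sub>2 > t) \<le> \<epsilon> F(t)\<close> for large \<open>s\<close>,
  where \<open>F(t)\<close>, \<open>H(t)\<close> denote tails. With the elementary bound \<open>2 H(x) - H(x)\<^sup>2 \<le> (H * H)(x)\<close>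
  this gives \<open>(H * H)(x) \<sim> 2 H(x)\<close>.\<close>

lemma emeasure_Un3_le:
  assumes "A \<in> sets M" "B \<in> sets M" "C \<in> sets M"
  shows "emeasure M (A \<union> B \<union> C) \<le> emeasure M A + emeasure M B + emeasure M C"
  using assms by (meson add_right_mono emeasure_subadditive order_trans sets.Un)

lemma (in prob_space) nn_integral_symmetric_pair:
  assumes [measurable]: "P \<in> borel_measurable M" "Q \<in> borel_measurable M" "I \<in> borel_measurable M"
  shows "(\<integral>\<^sup>+y1. \<integral>\<^sup>+y2. P y1 + P y2 + Q y1 * I y2 + Q y2 * I y1 \<partial>M \<partial>M)
     = 2 * integral\<^sup>N M P + 2 * (integral\<^sup>N M Q * integral\<^sup>N M I)"
proof -
  have inner: "(\<integral>\<^sup>+y2. P y1 + P y2 + Q y1 * I y2 + Q y2 * I y1 \<partial>M)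
     = P y1 + integral\<^sup>N M P + Q y1 * integral\<^sup>N M I + integral\<^sup>N M Q * I y1" for y1
    by (simp add: nn_integral_add nn_integral_cmult nn_integral_multc emeasure_space_1)
  show ?thesis
    by (simp add: inner nn_integral_add nn_integral_cmult nn_integral_multc emeasure_space_1 mult_2)
qed

context real_distribution
begin

lemma tail_eq_measure_greaterThan: "tail M x = measure M {x<..}"
proof -
  have "measure M {x<..} = measure M (space M - {..x})"
    by (simp add: Compl_eq_Diff_UNIV[symmetric])
  also have "\<dots> = 1 - measure M {..x}"
    by (rule prob_compl) simp
  finally show ?thesis by (simp add: tail_def)
qed

lemma measure_greaterThan_antimono: "s \<le> t \<Longrightarrow> measure M {t<..} \<le> measure M {s<..}"
  by (intro finite_measure_mono) auto

lemma tendsto_measure_greaterThan_at_top: "((\<lambda>t. measure M {t<..}) \<longlongrightarrow> 0) at_top"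
proof -
  have "((\<lambda>t. 1 - cdf M t) \<longlongrightarrow> 1 - 1) at_top"
    by (intro tendsto_intros cdf_lim_at_top_prob)
  then show ?thesis
    by (simp add: tail_eq_measure_greaterThan[symmetric] tail_def cdf_def)
qed

lemma ex_measure_greaterThan_less:
  assumes "0 < c"
  shows "\<exists>t\<ge>a. measure M {t<..} < c"
proof -
  obtain t0 where "\<And>t. t \<ge> t0 \<Longrightarrow> measure M {t<..} < c"
    using order_tendstoD(2)[OF tendsto_measure_greaterThan_at_top assms]
    by (auto simp: eventually_at_top_linorder)
  then show ?thesis
    by (intro exI[of _ "max a t0"]) auto
qed

lemma measure_atLeastAtMost_nonneg:
  assumes "measure M {..<0} = 0" "0 \<le> s"
  shows "measure M {0..s} = 1 - measure M {s<..}"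
proof -
  have "measure M {..s} = measure M ({..<0} \<union> {0..s})"
    using assms by (intro arg_cong[where f="measure M"]) auto
  also have "\<dots> = measure M {0..s}"
    using assms by (subst finite_measure_Union) auto
  finally show ?thesis
    using tail_eq_measure_greaterThan[of s] by (simp add: tail_def)
qed

end

lemma real_distribution_pair_Times:
  assumes "real_distribution M" "real_distribution N" "A \<in> sets borel" "B \<in> sets borel"
  shows "measure (M \<Otimes>\<^sub>M N) (A \<times> B) = measure M A * measure N B"
proof -
  interpret M: real_distribution M by fact
  interpret N: real_distribution N by fact
  have "emeasure (M \<Otimes>\<^sub>M N) (A \<times> B) = emeasure M A * emeasure N B"
    using assms by (intro N.emeasure_pair_measure_Times) auto
  then show ?thesis
    by (simp add: measure_def enn2real_mult)
qed

lemma real_distribution_convolution: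
  assumes "real_distribution M" "real_distribution N"
  shows "real_distribution (M \<star> N)"
proof -
  interpret M: real_distribution M by fact
  interpret N: real_distribution N by fact
  interpret pair_prob_space M N ..
  show ?thesis
    unfolding convolution_def by (intro P.real_distribution_distr) measurable
qed

lemma measure_convolution_greaterThan:
  assumes "real_distribution M" "real_distribution N"
  shows "measure (M \<star> N) {x<..} = measure (M \<Otimes>\<^sub>M N) {p. x < fst p + snd p}"
proof -
  interpret M: real_distribution M by fact
  interpret N: real_distribution N by fact
  have "measure (M \<star> N) {x<..} = measure (M \<Otimes>\<^sub>M N) ((\<lambda>(a, b). a + b) -` {x<..} \<inter> space (M \<Otimes>\<^sub>M N))"
    unfolding convolution_def by (intro measure_distr) auto
  also have "(\<lambda>(a, b). a + b) -` {x<..} \<inter> space (M \<Otimes>\<^sub>M N) = {p. x < fst p + snd p}"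
    by (auto simp: space_pair_measure)
  finally show ?thesis .
qed

lemma convolution_greaterThan_lower_bound:
  assumes "real_distribution H" and nonneg: "AE a in H. 0 \<le> a" and "0 \<le> x"
  shows "2 * measure H {x<..} - (measure H {x<..})\<^sup>2 \<le> measure (H \<star> H) {x<..}"
proof -
  interpret H: real_distribution H by fact
  interpret HH: pair_prob_space H H ..
  have H_nonneg: "measure H {0..} = 1"
    using H.prob_space nonneg by (subst measure_eq_AE[where B=UNIV]) auto
  define U where "U = {x<..} \<times> ({0..} :: real set)"
  define V where "V = ({0..} :: real set) \<times> {x<..}"
  have U_V_sets: "U \<in> sets (H \<Otimes>\<^sub>M H)" "V \<in> sets (H \<Otimes>\<^sub>M H)"
    by (simp_all add: U_def V_def)
  have "U \<inter> V = {x<..} \<times> {x<..}"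
    using \<open>0 \<le> x\<close> by (auto simp: U_def V_def)
  then have "2 * measure H {x<..} - (measure H {x<..})\<^sup>2 = measure (H \<Otimes>\<^sub>M H) (U \<union> V)"
    using U_V_sets
    by (subst measure_Un3) (simp_all add: HH.P.fmeasurable_eq_sets U_def V_def
        real_distribution_pair_Times[OF assms(1,1)] H_nonneg power2_eq_square)
  also have "\<dots> \<le> measure (H \<Otimes>\<^sub>M H) {p. x < fst p + snd p}"
  proof (intro HH.P.finite_measure_mono)
    have "{p \<in> space (H \<Otimes>\<^sub>M H). x < fst p + snd p} \<in> sets (H \<Otimes>\<^sub>M H)"
      by measurable
    then show "{p. x < fst p + snd p} \<in> sets (H \<Otimes>\<^sub>M H)"
      by (simp add: space_pair_measure)
  qed (auto simp: U_def V_def)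
  finally show ?thesis
    by (simp add: measure_convolution_greaterThan[OF assms(1,1)])
qed

lemma asymp_equiv_twice_by_shift_bounds:
  fixes S T :: "real \<Rightarrow> real"
  assumes T_pos: "\<And>x. 0 < T x" and T_lim: "(T \<longlongrightarrow> 0) at_top"
    and T_shift: "\<And>h. (\<lambda>x. T (x - h)) \<sim>[at_top] T"
    and lower: "eventually (\<lambda>x. 2 * T x - (T x)\<^sup>2 \<le> S x) at_top"
    and upper: "\<And>e. 0 < e \<Longrightarrow> \<exists>h. eventually (\<lambda>x. S x \<le> 2 * T (x - h) + e * T x) at_top"
  shows "S \<sim>[at_top] (\<lambda>x. 2 * T x)"
proof (rule asymp_equivI', rule tendstoI)
  fix r :: real assume "r > 0"
  then obtain h where "eventually (\<lambda>x. S x \<le> 2 * T (x - h) + r / 4 * T x) at_top"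
    using upper[of "r / 4"] by auto
  moreover have "eventually (\<lambda>x. norm (T (x - h)) \<le> (1 + r / 4) * norm (T x)) at_top"
    using asymp_equiv_imp_eventually_le[OF T_shift, of "1 + r / 4"] \<open>r > 0\<close> by simp
  moreover have "eventually (\<lambda>x. T x < r) at_top"
    using order_tendstoD(2)[OF T_lim \<open>r > 0\<close>] .
  ultimately show "eventually (\<lambda>x. dist (S x / (2 * T x)) 1 < r) at_top"
    using lower
  proof eventually_elim
    case (elim x)
    have "S x \<le> (2 + 3 * r / 4) * T x"
      using elim T_pos[of x] T_pos[of "x - h"] by (simp add: algebra_simps)
    then have upper_ratio: "S x / (2 * T x) \<le> 1 + 3 * r / 8"
      using T_pos[of x] by (simp add: divide_le_eq algebra_simps)
    have lower_ratio: "1 - T x / 2 \<le> S x / (2 * T x)"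
      using elim T_pos[of x] by (simp add: le_divide_eq algebra_simps power2_eq_square)
    show ?case
      using upper_ratio lower_ratio elim \<open>r > 0\<close> by (simp add: dist_real_def abs_less_iff)
  qed
qed

lemma long_tailed_subexponentialI:
  assumes long_tailed: "long_tailed H" and nonneg: "AE a in H. 0 \<le> a"
    and upper: "\<And>e. 0 < e \<Longrightarrow> \<exists>h. \<forall>x>0.
      measure (H \<star> H) {x<..} \<le> 2 * measure H {x - h<..} + e * measure H {x<..}"
  shows "subexponential H"
proof -
  interpret H: real_distribution H
    using long_tailed by (simp add: long_tailed_def)
  interpret HH: real_distribution "H \<star> H"
    by (intro real_distribution_convolution) unfold_locales
  have "(\<lambda>x. measure (H \<star> H) {x<..}) \<sim>[at_top] (\<lambda>x. 2 * measure H {x<..})"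
  proof (rule asymp_equiv_twice_by_shift_bounds)
    show "eventually (\<lambda>x. 2 * measure H {x<..} - (measure H {x<..})\<^sup>2 \<le> measure (H \<star> H) {x<..}) at_top"
      using eventually_ge_at_top[of 0]
      by eventually_elim (rule convolution_greaterThan_lower_bound[OF H.real_distribution_axioms nonneg])
    show "\<exists>h. eventually (\<lambda>x. measure (H \<star> H) {x<..} \<le> 2 * measure H {x - h<..} + e * measure H {x<..}) at_top"
      if "0 < e" for e
      using upper[OF that] eventually_gt_at_top[of 0] by (metis (mono_tags, lifting) eventually_mono)
  qed (use long_tailed in \<open>simp_all add: long_tailed_def H.tail_eq_measure_greaterThan
    H.tendsto_measure_greaterThan_at_top\<close>)
  moreover have "measure H {..<0} = 0"
    using nonneg by (subst measure_eq_AE[where B="{}"]) auto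
  ultimately show ?thesis
    using long_tailed
    by (simp add: subexponential_def long_tailed_def H.tail_eq_measure_greaterThan HH.tail_eq_measure_greaterThan)
qed

section \<open>Consequences of subexponentiality\<close>

definition both_above :: "real \<Rightarrow> real \<Rightarrow> (real \<times> real) set" where
  "both_above s t = {p. s < fst p \<and> s < snd p \<and> t < fst p + snd p}"

locale subexponential_law =
  fixes F :: "real measure"
  assumes subexponential: "subexponential F"
begin

sublocale real_distribution F
  using subexponential by (simp add: subexponential_def)

sublocale FF: pair_prob_space F F ..

lemma measure_lessThan_0: "measure F {..<0} = 0"
  using subexponential by (simp add: subexponential_def)

lemma AE_nonneg: "AE u in F. 0 \<le> u"
  by (intro AE_I'[of "{..<0}"] null_setsI) (auto simp: emeasure_eq_measure measure_lessThan_0)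

lemma measure_greaterThan_pos: "0 < measure F {t<..}"
  using subexponential by (simp add: subexponential_def tail_eq_measure_greaterThan)

lemma sum_greaterThan_sets: "{p. t < fst p + snd p} \<in> sets (F \<Otimes>\<^sub>M F)"
proof -
  have "{p \<in> space (F \<Otimes>\<^sub>M F). t < fst p + snd p} \<in> sets (F \<Otimes>\<^sub>M F)"
    by measurable
  then show ?thesis
    by (simp add: space_pair_measure)
qed

lemma both_above_sets: "both_above s t \<in> sets (F \<Otimes>\<^sub>M F)"
proof -
  have "{p \<in> space (F \<Otimes>\<^sub>M F). s < fst p \<and> s < snd p \<and> t < fst p + snd p} \<in> sets (F \<Otimes>\<^sub>M F)"
    by measurable
  then show ?thesis
    by (simp add: space_pair_measure both_above_def)
qed

lemma sum_tail_asymp: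
  "(\<lambda>t. measure (F \<Otimes>\<^sub>M F) {p. t < fst p + snd p}) \<sim>[at_top] (\<lambda>t. 2 * measure F {t<..})"
proof -
  interpret FF': real_distribution "F \<star> F"
    by (intro real_distribution_convolution) unfold_locales
  show ?thesis
    using subexponential
    by (simp add: subexponential_def tail_eq_measure_greaterThan FF'.tail_eq_measure_greaterThan
        measure_convolution_greaterThan[OF real_distribution_axioms real_distribution_axioms])
qed

lemma sum_tail_eventually_le:
  assumes "1 < c"
  shows "\<exists>t0. \<forall>t\<ge>t0. measure (F \<Otimes>\<^sub>M F) {p. t < fst p + snd p} \<le> c * (2 * measure F {t<..})"
  using asymp_equiv_imp_eventually_le[OF sum_tail_asymp assms]
  by (simp add: eventually_at_top_linorder)

lemma sum_tail_le_const_tail: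
  "\<exists>C>0. \<forall>t. measure (F \<Otimes>\<^sub>M F) {p. t < fst p + snd p} \<le> C * measure F {t<..}"
proof -
  obtain t0 where t0: "\<And>t. t \<ge> t0 \<Longrightarrow> measure (F \<Otimes>\<^sub>M F) {p. t < fst p + snd p} \<le> 3 * measure F {t<..}"
    using sum_tail_eventually_le[of "3/2"] by auto
  define C where "C = max 3 (1 / measure F {t0<..})"
  have "measure (F \<Otimes>\<^sub>M F) {p. t < fst p + snd p} \<le> C * measure F {t<..}" for t
  proof (cases "t0 \<le> t")
    case True
    have "3 * measure F {t<..} \<le> C * measure F {t<..}"
      by (intro mult_right_mono) (auto simp: C_def)
    then show ?thesis
      using t0[OF True] by linarith
  next
    case False
    have "measure (F \<Otimes>\<^sub>M F) {p. t < fst p + snd p} \<le> 1 / measure F {t0<..} * measure F {t0<..}"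
      using measure_greaterThan_pos[of t0] by simp
    also have "\<dots> \<le> C * measure F {t<..}"
      using False measure_greaterThan_pos[of t0]
      by (intro mult_mono) (auto simp: C_def measure_greaterThan_antimono)
    finally show ?thesis .
  qed
  moreover have "C > 0"
    by (simp add: C_def)
  ultimately show ?thesis
    by blast
qed

text \<open>The strips \<open>[0, s] \<times> (t, \<infinity>)\<close> and \<open>(t, \<infinity>) \<times> [0, s]\<close> carry almost \<open>2 F(t)\<close> when \<open>F(s)\<close>
  is small, so subexponentiality leaves only \<open>o(F(t))\<close> for \<open>both_above s t\<close>.\<close>
lemma both_above_add_strips_le:
  assumes "0 \<le> s" "s < t"
  shows "2 * (1 - measure F {s<..}) * measure F {t<..} + measure (F \<Otimes>\<^sub>M F) (both_above s t)
    \<le> measure (F \<Otimes>\<^sub>M F) {p. t < fst p + snd p}"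
proof -
  define A1 where "A1 = {0..s} \<times> {t<..}"
  define A2 where "A2 = {t<..} \<times> {0..s}"
  have strip: "measure (F \<Otimes>\<^sub>M F) A1 = (1 - measure F {s<..}) * measure F {t<..}"
    "measure (F \<Otimes>\<^sub>M F) A2 = (1 - measure F {s<..}) * measure F {t<..}"
    using assms
    by (simp_all add: A1_def A2_def real_distribution_pair_Times[OF real_distribution_axioms real_distribution_axioms]
        measure_atLeastAtMost_nonneg measure_lessThan_0)
  have "measure (F \<Otimes>\<^sub>M F) (A1 \<union> A2 \<union> both_above s t)
      = measure (F \<Otimes>\<^sub>M F) A1 + measure (F \<Otimes>\<^sub>M F) A2 + measure (F \<Otimes>\<^sub>M F) (both_above s t)"
    using assms both_above_sets
    by (subst FF.P.finite_measure_Union; (subst FF.P.finite_measure_Union)?)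
      (auto simp: A1_def A2_def both_above_def)
  moreover have "measure (F \<Otimes>\<^sub>M F) (A1 \<union> A2 \<union> both_above s t) \<le> measure (F \<Otimes>\<^sub>M F) {p. t < fst p + snd p}"
    using assms by (intro FF.P.finite_measure_mono sum_greaterThan_sets) (auto simp: A1_def A2_def both_above_def)
  ultimately show ?thesis
    using strip by (simp add: algebra_simps)
qed

lemma both_above_le_square: "measure (F \<Otimes>\<^sub>M F) (both_above s t) \<le> measure F {s<..} * measure F {s<..}"
proof -
  have "measure (F \<Otimes>\<^sub>M F) (both_above s t) \<le> measure (F \<Otimes>\<^sub>M F) ({s<..} \<times> {s<..})"
    by (intro FF.P.finite_measure_mono) (auto simp: both_above_def)
  then show ?thesis
    by (simp add: real_distribution_pair_Times[OF real_distribution_axioms real_distribution_axioms])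
qed

lemma both_above_le_tail:
  assumes "0 < e"
  shows "\<exists>s>0. \<forall>t. measure (F \<Otimes>\<^sub>M F) (both_above s t) \<le> e * measure F {t<..}"
proof -
  define T where "T t = measure F {t<..}" for t
  define e' where "e' = e / 3"
  have "e' > 0"
    using assms by (simp add: e'_def)
  obtain t0 where t0: "\<And>t. t \<ge> t0 \<Longrightarrow> measure (F \<Otimes>\<^sub>M F) {p. t < fst p + snd p} \<le> (1 + e' / 2) * (2 * T t)"
    using sum_tail_eventually_le[of "1 + e' / 2"] \<open>e' > 0\<close> by (auto simp: T_def)
  have "0 < min e' (e' * T t0)"
    using \<open>e' > 0\<close> measure_greaterThan_pos by (simp add: T_def)
  then obtain s where "s \<ge> 1" and "T s < min e' (e' * T t0)"
    using ex_measure_greaterThan_less unfolding T_def by blast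
  then have Ts: "T s < e'" "T s < e' * T t0"
    by simp_all
  have T_antimono: "a \<le> b \<Longrightarrow> T b \<le> T a" for a b
    by (simp add: T_def measure_greaterThan_antimono)
  have T_bounds: "0 \<le> T a" "T a \<le> 1" for a
    by (simp_all add: T_def)
  have e'_le: "e' * T a \<le> e * T a" for a
    using assms T_bounds[of a] by (intro mult_right_mono) (auto simp: e'_def)
  have "measure (F \<Otimes>\<^sub>M F) (both_above s t) \<le> e * T t" for t
  proof -
    have square: "measure (F \<Otimes>\<^sub>M F) (both_above s t) \<le> T s * T s"
      unfolding T_def by (rule both_above_le_square)
    consider "t \<le> s" | "t < t0" | "s < t" "t0 \<le> t"
      by linarith
    then show ?thesis
    proof cases
      case 1
      have "T s * T s \<le> e' * T t"
        using Ts T_bounds[of s] T_antimono[OF 1] by (intro mult_mono) auto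
      then show ?thesis
        using square e'_le[of t] by linarith
    next
      case 2
      have "T s * T s \<le> T s"
        using T_bounds[of s] by (simp add: mult_left_le)
      also have "\<dots> \<le> e' * T t"
        using Ts T_antimono[of t t0] 2 \<open>e' > 0\<close> by (smt (verit) mult_left_mono)
      finally have "T s * T s \<le> e' * T t" .
      then show ?thesis
        using square e'_le[of t] by linarith
    next
      case 3
      have "measure (F \<Otimes>\<^sub>M F) (both_above s t) \<le> (1 + e' / 2) * (2 * T t) - 2 * (1 - T s) * T t"
        using both_above_add_strips_le[of s t] t0[of t] 3 \<open>s \<ge> 1\<close> by (simp add: T_def)
      also have "\<dots> = (e' + 2 * T s) * T t"
        by (simp add: algebra_simps)
      also have "\<dots> \<le> e * T t"
        using Ts T_bounds[of t] by (intro mult_right_mono) (auto simp: e'_def)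
      finally show ?thesis .
    qed
  qed
  then show ?thesis
    using \<open>s \<ge> 1\<close> unfolding T_def by (intro exI[of _ s]) auto
qed

end

section \<open>The law of a product\<close>

definition scaled_tail :: "real measure \<Rightarrow> real \<Rightarrow> real \<Rightarrow> ennreal" where
  "scaled_tail F c y = emeasure F {u. 0 \<le> u \<and> c < u * y}"

definition product_law :: "real measure \<Rightarrow> real measure \<Rightarrow> real measure" where
  "product_law F G = distr (F \<Otimes>\<^sub>M G) borel (\<lambda>p. fst p * snd p)"

definition wsum_above :: "real \<Rightarrow> real \<Rightarrow> real \<Rightarrow> (real \<times> real) set" where
  "wsum_above x y1 y2 = {p. 0 \<le> fst p \<and> 0 \<le> snd p \<and> x < fst p * y1 + snd p * y2}"

lemma (in real_distribution) scaled_tail_measurable [measurable]: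
  "(\<lambda>y. scaled_tail M c y) \<in> borel_measurable borel"
  unfolding scaled_tail_def
proof (rule measurable_emeasure)
  have "{p \<in> space (borel \<Otimes>\<^sub>M M). 0 \<le> snd p \<and> c < snd p * fst p} \<in> sets (borel \<Otimes>\<^sub>M M)"
    by measurable
  then show "{p \<in> space (borel \<Otimes>\<^sub>M M). snd p \<in> {u. 0 \<le> u \<and> c < u * fst p}} \<in> sets (borel \<Otimes>\<^sub>M M)"
    by simp
qed simp

locale nonneg_product =
  F: real_distribution F + G: real_distribution G for F G +
  assumes AE_F_nonneg: "AE u in F. 0 \<le> u"
begin

sublocale FG: pair_prob_space F G ..

lemma real_distribution_product_law: "real_distribution (product_law F G)"
  unfolding product_law_def by (intro FG.P.real_distribution_distr) measurable

lemma nn_integral_product_law: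
  assumes [measurable]: "f \<in> borel_measurable borel"
  shows "(\<integral>\<^sup>+a. f a \<partial>product_law F G) = (\<integral>\<^sup>+y. \<integral>\<^sup>+u. f (u * y) \<partial>F \<partial>G)"
proof -
  have "(\<integral>\<^sup>+a. f a \<partial>product_law F G) = (\<integral>\<^sup>+p. f (fst p * snd p) \<partial>(F \<Otimes>\<^sub>M G))"
    unfolding product_law_def by (intro nn_integral_distr) auto
  also have "\<dots> = (\<integral>\<^sup>+y. \<integral>\<^sup>+u. f (u * y) \<partial>F \<partial>G)"
    by (subst FG.nn_integral_snd[symmetric]) auto
  finally show ?thesis .
qed

lemma emeasure_product_law_greaterThan:
  "emeasure (product_law F G) {c<..} = (\<integral>\<^sup>+y. scaled_tail F c y \<partial>G)"
proof -
  have "emeasure (product_law F G) {c<..} = (\<integral>\<^sup>+a. indicator {c<..} a \<partial>product_law F G)"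
    by (simp add: product_law_def)
  also have "\<dots> = (\<integral>\<^sup>+y. \<integral>\<^sup>+u. indicator {c<..} (u * y) \<partial>F \<partial>G)"
    by (rule nn_integral_product_law) measurable
  also have "\<dots> = (\<integral>\<^sup>+y. scaled_tail F c y \<partial>G)"
  proof (intro nn_integral_cong)
    fix y
    have "(\<integral>\<^sup>+u. indicator {c<..} (u * y) \<partial>F) = (\<integral>\<^sup>+u. indicator {u. 0 \<le> u \<and> c < u * y} u \<partial>F)"
      using AE_F_nonneg by (intro nn_integral_cong_AE) (auto simp: indicator_def)
    then show "(\<integral>\<^sup>+u. indicator {c<..} (u * y) \<partial>F) = scaled_tail F c y"
      by (simp add: scaled_tail_def)
  qed
  finally show ?thesis .
qed

lemma emeasure_pair_wsum_above:
  "emeasure (F \<Otimes>\<^sub>M F) (wsum_above x y1 y2) = (\<integral>\<^sup>+u1. \<integral>\<^sup>+u2. indicator {x<..} (u1 * y1 + u2 * y2) \<partial>F \<partial>F)"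
proof -
  interpret FF: pair_prob_space F F ..
  have "wsum_above x y1 y2 \<in> sets (F \<Otimes>\<^sub>M F)"
  proof -
    have "{p \<in> space (F \<Otimes>\<^sub>M F). 0 \<le> fst p \<and> 0 \<le> snd p \<and> x < fst p * y1 + snd p * y2} \<in> sets (F \<Otimes>\<^sub>M F)"
      by measurable
    then show ?thesis
      by (simp add: space_pair_measure wsum_above_def)
  qed
  then have "emeasure (F \<Otimes>\<^sub>M F) (wsum_above x y1 y2)
      = (\<integral>\<^sup>+u1. \<integral>\<^sup>+u2. indicator (wsum_above x y1 y2) (u1, u2) \<partial>F \<partial>F)"
    by (rule F.emeasure_pair_measure)
  also have "\<dots> = (\<integral>\<^sup>+u1. \<integral>\<^sup>+u2. indicator {x<..} (u1 * y1 + u2 * y2) \<partial>F \<partial>F)"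
    using AE_F_nonneg
  proof (intro nn_integral_cong_AE, eventually_elim)
    case (elim u1)
    show ?case
      using AE_F_nonneg elim
      by (intro nn_integral_cong_AE) (auto elim!: eventually_mono simp: indicator_def wsum_above_def)
  qed
  finally show ?thesis .
qed

lemma emeasure_product_law_convolution_greaterThan:
  "emeasure (product_law F G \<star> product_law F G) {x<..}
    = (\<integral>\<^sup>+y1. \<integral>\<^sup>+y2. emeasure (F \<Otimes>\<^sub>M F) (wsum_above x y1 y2) \<partial>G \<partial>G)"
proof -
  interpret H: real_distribution "product_law F G"
    by (rule real_distribution_product_law)
  define K where "K a = (\<integral>\<^sup>+y2. \<integral>\<^sup>+u2. indicator {x<..} (a + u2 * y2) \<partial>F \<partial>G)" for a
  have [measurable]: "K \<in> borel_measurable borel"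
    unfolding K_def by measurable
  have "emeasure (product_law F G \<star> product_law F G) {x<..}
      = (\<integral>\<^sup>+a. \<integral>\<^sup>+b. indicator {x<..} (a + b) \<partial>product_law F G \<partial>product_law F G)"
    by (intro convolution_emeasure') (auto simp: H.finite_measure_axioms)
  also have "\<dots> = (\<integral>\<^sup>+a. K a \<partial>product_law F G)"
    unfolding K_def by (intro nn_integral_cong nn_integral_product_law) measurable
  also have "\<dots> = (\<integral>\<^sup>+y1. \<integral>\<^sup>+u1. K (u1 * y1) \<partial>F \<partial>G)"
    by (rule nn_integral_product_law) measurable
  also have "\<dots> = (\<integral>\<^sup>+y1. \<integral>\<^sup>+y2. emeasure (F \<Otimes>\<^sub>M F) (wsum_above x y1 y2) \<partial>G \<partial>G)"
    unfolding K_def emeasure_pair_wsum_above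
    by (intro nn_integral_cong FG.Fubini'[symmetric]) measurable
  finally show ?thesis .
qed

end

context real_distribution
begin

lemma emeasure_pair_Times_UNIV: "A \<in> sets borel \<Longrightarrow> emeasure (M \<Otimes>\<^sub>M M) (A \<times> UNIV) = emeasure M A"
  using emeasure_pair_measure_Times[of A M UNIV] emeasure_space_1 by simp

lemma emeasure_pair_UNIV_Times: "B \<in> sets borel \<Longrightarrow> emeasure (M \<Otimes>\<^sub>M M) (UNIV \<times> B) = emeasure M B"
  using emeasure_pair_measure_Times[of UNIV M B] emeasure_space_1 by simp

lemma emeasure_greaterThan_divide_le_scaled_tail:
  assumes "0 < x" "0 < y"
  shows "emeasure M {x / y<..} \<le> scaled_tail M x y"
  unfolding scaled_tail_def
proof (intro emeasure_mono)
  show "{x / y<..} \<subseteq> {u. 0 \<le> u \<and> x < u * y}"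
    using assms by (auto simp: pos_divide_less_eq less_imp_le[OF order.strict_trans[OF divide_pos_pos]])
qed simp

lemma scaled_tail_mono: "0 \<le> a \<Longrightarrow> a \<le> y \<Longrightarrow> scaled_tail M x a \<le> scaled_tail M x y"
  unfolding scaled_tail_def
  by (intro emeasure_mono) (auto intro: order.strict_trans2 mult_left_mono)

lemma scaled_tail_max_le: "scaled_tail M x (max y1 y2) \<le> scaled_tail M x y1 + scaled_tail M x y2"
  by (cases "y1 \<le> y2") (auto simp: max_def add_increasing add_increasing2)

end

section \<open>Tail of the convolution square of the product law\<close>

definition wsum_above_both :: "real \<Rightarrow> real \<Rightarrow> real \<Rightarrow> real \<Rightarrow> (real \<times> real) set" where
  "wsum_above_both h x y1 y2 = wsum_above x y1 y2 \<inter> {p. h < fst p * y1 \<and> h < snd p * y2}"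

text \<open>Cutoffs for the weights: a summand \<open>u y > h\<close> forces \<open>u > s\<^sub>0\<close> when \<open>y \<le> L'\<close> and
  \<open>u > s\<close> when \<open>y \<le> L\<close>; the three tail conditions make the leftover terms at most \<open>e H(x)\<close>.\<close>
locale product_cutoffs = subexponential_law F + G: real_distribution G for F G +
  fixes e C L L' s0 s h :: real
  assumes AE_G_nonneg: "AE y in G. 0 \<le> y"
    and e_pos: "0 < e" and C_pos: "0 < C"
    and sum_tail_le: "\<And>t. measure (F \<Otimes>\<^sub>M F) {p. t < fst p + snd p} \<le> C * measure F {t<..}"
    and both_above_le: "\<And>t. measure (F \<Otimes>\<^sub>M F) (both_above s0 t) \<le> e * measure F {t<..}"
    and cutoffs: "0 < L" "L \<le> L'" "0 < s0" "s0 \<le> s" "s * L \<le> h" "s0 * L' \<le> h"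
    and G_tail_L: "C * measure G {L<..} \<le> e"
    and G_tail_L': "measure G {L'<..} \<le> e * measure G {2 * L<..}"
    and F_tail_s: "measure F {s<..} \<le> e * measure F {2 * s0<..}"
begin

sublocale nonneg_product F G
  by unfold_locales (rule AE_nonneg)

abbreviation T :: "real \<Rightarrow> real \<Rightarrow> ennreal" where
  "T \<equiv> scaled_tail F"

lemma both_above_le_emeasure: "emeasure (F \<Otimes>\<^sub>M F) (both_above s0 t) \<le> ennreal e * emeasure F {t<..}"
  using both_above_le[of t] e_pos
  by (simp add: FF.P.emeasure_eq_measure emeasure_eq_measure ennreal_mult[symmetric] ennreal_leI)

lemma sum_tail_le_emeasure:
  "emeasure (F \<Otimes>\<^sub>M F) {p. t < fst p + snd p} \<le> ennreal C * emeasure F {t<..}"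
  using sum_tail_le[of t] C_pos
  by (simp add: FF.P.emeasure_eq_measure emeasure_eq_measure ennreal_mult[symmetric] ennreal_leI)

lemma wsum_above_both_sets: "wsum_above_both h' x y1 y2 \<in> sets (F \<Otimes>\<^sub>M F)"
proof -
  have "{p \<in> space (F \<Otimes>\<^sub>M F). 0 \<le> fst p \<and> 0 \<le> snd p \<and> x < fst p * y1 + snd p * y2
      \<and> h' < fst p * y1 \<and> h' < snd p * y2} \<in> sets (F \<Otimes>\<^sub>M F)"
    by measurable
  then show ?thesis
    by (simp add: space_pair_measure wsum_above_both_def wsum_above_def conj_assoc)
qed

lemma emeasure_wsum_above_both_swap:
  "emeasure (F \<Otimes>\<^sub>M F) (wsum_above_both h' x y2 y1) = emeasure (F \<Otimes>\<^sub>M F) (wsum_above_both h' x y1 y2)"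
proof -
  have "emeasure (F \<Otimes>\<^sub>M F) (wsum_above_both h' x y1 y2)
      = emeasure (distr (F \<Otimes>\<^sub>M F) (F \<Otimes>\<^sub>M F) (\<lambda>(a, b). (b, a))) (wsum_above_both h' x y1 y2)"
    by (subst FF.distr_pair_swap) simp
  also have "\<dots> = emeasure (F \<Otimes>\<^sub>M F) ((\<lambda>(a, b). (b, a)) -` wsum_above_both h' x y1 y2 \<inter> space (F \<Otimes>\<^sub>M F))"
    by (intro emeasure_distr wsum_above_both_sets) (simp add: measurable_pair_swap')
  also have "(\<lambda>(a, b). (b, a)) -` wsum_above_both h' x y1 y2 \<inter> space (F \<Otimes>\<^sub>M F) = wsum_above_both h' x y2 y1"
    by (auto simp: wsum_above_both_def wsum_above_def space_pair_measure)
  finally show ?thesis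
    by simp
qed

text \<open>Both weights bounded: both summands exceed \<open>s\<^sub>0\<close>, so the subexponential estimate applies.\<close>
lemma wsum_above_both_small_weights:
  assumes "0 \<le> y1" "0 \<le> y2" "y1 \<le> L'" "y2 \<le> L'" "0 < x"
  shows "emeasure (F \<Otimes>\<^sub>M F) (wsum_above_both h x y1 y2) \<le> ennreal e * (T x y1 + T x y2)"
proof (cases "max y1 y2 = 0")
  case True
  then have "wsum_above_both h x y1 y2 = {}"
    using assms cutoffs by (auto simp: wsum_above_both_def wsum_above_def max_def split: if_splits)
  then show ?thesis
    by simp
next
  case False
  define m where "m = max y1 y2"
  have "0 < m"
    using False assms by (auto simp: m_def max_def)
  have "wsum_above_both h x y1 y2 \<subseteq> both_above s0 (x / m)"
  proof safe
    fix a b assume "(a, b) \<in> wsum_above_both h x y1 y2"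
    then have ab: "0 \<le> a" "0 \<le> b" "x < a * y1 + b * y2" "h < a * y1" "h < b * y2"
      by (auto simp: wsum_above_both_def wsum_above_def)
    have "s0 * y1 \<le> s0 * L'" "s0 * y2 \<le> s0 * L'"
      using assms cutoffs by (auto intro: mult_left_mono)
    then have "s0 * y1 \<le> h" "s0 * y2 \<le> h"
      using cutoffs by linarith+
    then have "s0 * y1 < a * y1" "s0 * y2 < b * y2"
      using ab by linarith+
    then have "s0 < a" "s0 < b"
      using assms by (simp_all add: mult_less_cancel_right)
    moreover have "x < (a + b) * m"
      using ab mult_left_mono[of y1 m a] mult_left_mono[of y2 m b] by (auto simp: m_def algebra_simps)
    ultimately show "(a, b) \<in> both_above s0 (x / m)"
      using \<open>0 < m\<close> by (simp add: both_above_def pos_divide_less_eq)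
  qed
  then have "emeasure (F \<Otimes>\<^sub>M F) (wsum_above_both h x y1 y2) \<le> emeasure (F \<Otimes>\<^sub>M F) (both_above s0 (x / m))"
    by (intro emeasure_mono both_above_sets)
  also have "\<dots> \<le> ennreal e * emeasure F {x / m<..}"
    by (rule both_above_le_emeasure)
  also have "\<dots> \<le> ennreal e * T x m"
    using \<open>0 < m\<close> \<open>0 < x\<close> by (intro mult_left_mono emeasure_greaterThan_divide_le_scaled_tail) auto
  also have "\<dots> \<le> ennreal e * (T x y1 + T x y2)"
    unfolding m_def by (intro mult_left_mono scaled_tail_max_le) auto
  finally show ?thesis .
qed

lemma wsum_above_both_large_weights:
  assumes "L < y1" "L < y2" "0 < x"
  shows "emeasure (F \<Otimes>\<^sub>M F) (wsum_above_both h x y1 y2) \<le> ennreal C * (T x y1 + T x y2)"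
proof -
  define m where "m = max y1 y2"
  have "0 < m"
    using assms cutoffs by (auto simp: m_def max_def)
  have "wsum_above_both h x y1 y2 \<subseteq> {p. x / m < fst p + snd p}"
  proof safe
    fix a b assume "(a, b) \<in> wsum_above_both h x y1 y2"
    then have ab: "0 \<le> a" "0 \<le> b" "x < a * y1 + b * y2"
      by (auto simp: wsum_above_both_def wsum_above_def)
    then have "x < (a + b) * m"
      using mult_left_mono[of y1 m a] mult_left_mono[of y2 m b] by (auto simp: m_def algebra_simps)
    then show "x / m < fst (a, b) + snd (a, b)"
      using \<open>0 < m\<close> by (simp add: pos_divide_less_eq)
  qed
  then have "emeasure (F \<Otimes>\<^sub>M F) (wsum_above_both h x y1 y2) \<le> emeasure (F \<Otimes>\<^sub>M F) {p. x / m < fst p + snd p}"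
    by (intro emeasure_mono sum_greaterThan_sets)
  also have "\<dots> \<le> ennreal C * emeasure F {x / m<..}"
    by (rule sum_tail_le_emeasure)
  also have "\<dots> \<le> ennreal C * T x m"
    using \<open>0 < m\<close> \<open>0 < x\<close> by (intro mult_left_mono emeasure_greaterThan_divide_le_scaled_tail) auto
  also have "\<dots> \<le> ennreal C * (T x y1 + T x y2)"
    unfolding m_def by (intro mult_left_mono scaled_tail_max_le) auto
  finally show ?thesis .
qed

definition mixed_bound :: "real \<Rightarrow> real \<Rightarrow> ennreal" where
  "mixed_bound x y = 2 * (ennreal e * T x y) + T x (2 * L) * indicator {L'<..} y
     + emeasure F {s<..} * indicator {y. x < 2 * s0 * y} y"

text \<open>One large and one small weight: the small-weight summand exceeds \<open>s\<close>; either it alone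
  carries half of \<open>x\<close>, or the large-weight summand does and then either both summands exceed
  \<open>s\<^sub>0\<close> or \<open>x < 2 s\<^sub>0 y\<^sub>1\<close>.\<close>
lemma wsum_above_both_mixed_subset:
  assumes "L' < y1" "0 \<le> y2" "y2 \<le> L"
  shows "wsum_above_both h x y1 y2 \<subseteq> UNIV \<times> {u. 0 \<le> u \<and> x < u * (2 * L)}
    \<union> (if s0 \<le> x / (2 * y1) then both_above s0 (x / y1) else {})
    \<union> (if x < 2 * s0 * y1 then UNIV \<times> {s<..} else {})"
proof
  fix p assume p: "p \<in> wsum_above_both h x y1 y2"
  obtain a b where [simp]: "p = (a, b)"
    by (cases p)
  have ab: "0 \<le> a" "0 \<le> b" "x < a * y1 + b * y2" "h < b * y2"
    using p by (auto simp: wsum_above_both_def wsum_above_def)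
  have "0 < y1"
    using assms cutoffs by linarith
  have "b * y2 \<le> b * L"
    using ab assms by (intro mult_left_mono) auto
  then have "s * L < b * L"
    using ab cutoffs by linarith
  then have "s < b"
    using cutoffs by simp
  show "p \<in> UNIV \<times> {u. 0 \<le> u \<and> x < u * (2 * L)}
    \<union> (if s0 \<le> x / (2 * y1) then both_above s0 (x / y1) else {})
    \<union> (if x < 2 * s0 * y1 then UNIV \<times> {s<..} else {})"
  proof (cases "x < b * (2 * L)")
    case False
    then have "x / 2 < a * y1"
      using ab \<open>b * y2 \<le> b * L\<close> by (simp add: algebra_simps)
    then have "x / (2 * y1) < a"
      using \<open>0 < y1\<close> by (simp add: divide_less_eq mult.commute)
    moreover have "x / y1 < a + b"
    proof -
      have "b * y2 \<le> b * y1"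
        using ab assms cutoffs by (intro mult_left_mono) auto
      then show ?thesis
        using ab \<open>0 < y1\<close> by (simp add: pos_divide_less_eq algebra_simps)
    qed
    moreover have "x / (2 * y1) < s0 \<Longrightarrow> x < 2 * s0 * y1"
      using \<open>0 < y1\<close> by (simp add: divide_less_eq algebra_simps)
    ultimately show ?thesis
      using \<open>s < b\<close> cutoffs by (auto simp: both_above_def not_le)
  qed (use ab in simp)
qed

lemma wsum_above_both_mixed_weights:
  assumes "L' < y1" "0 \<le> y2" "y2 \<le> L" "0 < x"
  shows "emeasure (F \<Otimes>\<^sub>M F) (wsum_above_both h x y1 y2) \<le> mixed_bound x y1"
proof -
  define B where "B = (UNIV :: real set) \<times> {u. 0 \<le> u \<and> x < u * (2 * L)}"
  define P where "P = (if s0 \<le> x / (2 * y1) then both_above s0 (x / y1) else {})"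
  define Q where "Q = (if x < 2 * s0 * y1 then UNIV \<times> {s<..} else ({} :: (real \<times> real) set))"
  have "0 < y1"
    using assms cutoffs by linarith
  have sets: "B \<in> sets (F \<Otimes>\<^sub>M F)" "P \<in> sets (F \<Otimes>\<^sub>M F)" "Q \<in> sets (F \<Otimes>\<^sub>M F)"
    using both_above_sets[of s0 "x / y1"] by (simp_all add: B_def P_def Q_def)
  have "emeasure (F \<Otimes>\<^sub>M F) (wsum_above_both h x y1 y2) \<le> emeasure (F \<Otimes>\<^sub>M F) (B \<union> P \<union> Q)"
    using wsum_above_both_mixed_subset[OF assms(1-3)] sets
    by (intro emeasure_mono) (auto simp: B_def P_def Q_def)
  also have "\<dots> \<le> emeasure (F \<Otimes>\<^sub>M F) B + emeasure (F \<Otimes>\<^sub>M F) P + emeasure (F \<Otimes>\<^sub>M F) Q"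
    using sets by (rule emeasure_Un3_le)
  also have "emeasure (F \<Otimes>\<^sub>M F) B = T x (2 * L)"
    unfolding B_def scaled_tail_def by (rule emeasure_pair_UNIV_Times) simp
  also have "emeasure (F \<Otimes>\<^sub>M F) P \<le> ennreal e * T x y1"
  proof (cases "s0 \<le> x / (2 * y1)")
    case True
    then have "emeasure (F \<Otimes>\<^sub>M F) P \<le> ennreal e * emeasure F {x / y1<..}"
      by (simp add: P_def both_above_le_emeasure)
    also have "\<dots> \<le> ennreal e * T x y1"
      using assms \<open>0 < y1\<close> by (intro mult_left_mono emeasure_greaterThan_divide_le_scaled_tail) auto
    finally show ?thesis .
  qed (simp add: P_def)
  also have "emeasure (F \<Otimes>\<^sub>M F) Q = emeasure F {s<..} * indicator {y. x < 2 * s0 * y} y1"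
    by (simp add: Q_def emeasure_pair_UNIV_Times)
  also have "T x (2 * L) + ennreal e * T x y1 + emeasure F {s<..} * indicator {y. x < 2 * s0 * y} y1
      = ennreal e * T x y1 + T x (2 * L) * indicator {L'<..} y1 + emeasure F {s<..} * indicator {y. x < 2 * s0 * y} y1"
    using assms by (simp add: add.commute)
  also have "\<dots> \<le> mixed_bound x y1"
    unfolding mixed_bound_def mult_2 by (intro add_right_mono add_increasing2) simp_all
  finally show ?thesis
    by (simp add: add_mono)
qed

lemma e_tail_le_mixed_bound: "ennreal e * T x y \<le> mixed_bound x y"
  unfolding mixed_bound_def mult_2 by (intro add_increasing2) simp_all

lemma wsum_above_both_le:
  assumes "0 \<le> y1" "0 \<le> y2" "0 < x"
  shows "emeasure (F \<Otimes>\<^sub>M F) (wsum_above_both h x y1 y2)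
    \<le> mixed_bound x y1 + mixed_bound x y2
      + ennreal C * T x y1 * indicator {L<..} y2 + ennreal C * T x y2 * indicator {L<..} y1"
    (is "_ \<le> ?R")
proof -
  have mixed_le: "mixed_bound x y1 + mixed_bound x y2 \<le> ?R"
    by (rule add_increasing2, simp, rule add_increasing2) simp_all
  have mixed_le1: "mixed_bound x y1 \<le> ?R"
    by (rule order_trans[OF _ mixed_le], rule add_increasing2) simp_all
  have mixed_le2: "mixed_bound x y2 \<le> ?R"
    by (rule order_trans[OF _ mixed_le], rule add_increasing) simp_all
  consider "y1 \<le> L'" "y2 \<le> L'" | "L < y1" "L < y2" | "L' < y1" "y2 \<le> L" | "L' < y2" "y1 \<le> L"
    using cutoffs by linarith
  then show ?thesis
  proof cases
    case 1
    then have "emeasure (F \<Otimes>\<^sub>M F) (wsum_above_both h x y1 y2) \<le> ennreal e * (T x y1 + T x y2)"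
      using assms by (intro wsum_above_both_small_weights) auto
    also have "\<dots> \<le> mixed_bound x y1 + mixed_bound x y2"
      unfolding distrib_left by (intro add_mono e_tail_le_mixed_bound)
    finally show ?thesis
      using mixed_le by order
  next
    case 2
    then have "emeasure (F \<Otimes>\<^sub>M F) (wsum_above_both h x y1 y2)
        \<le> ennreal C * T x y1 * indicator {L<..} y2 + ennreal C * T x y2 * indicator {L<..} y1"
      using wsum_above_both_large_weights[of y1 y2 x] assms by (simp add: distrib_left)
    also have "\<dots> \<le> ?R"
      by (rule add_mono[OF add_increasing order_refl]) simp_all
    finally show ?thesis .
  next
    case 3
    then have "emeasure (F \<Otimes>\<^sub>M F) (wsum_above_both h x y1 y2) \<le> mixed_bound x y1"
      using assms by (intro wsum_above_both_mixed_weights) auto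
    then show ?thesis
      using mixed_le1 by order
  next
    case 4
    have "emeasure (F \<Otimes>\<^sub>M F) (wsum_above_both h x y1 y2) = emeasure (F \<Otimes>\<^sub>M F) (wsum_above_both h x y2 y1)"
      by (rule emeasure_wsum_above_both_swap[symmetric])
    also have "\<dots> \<le> mixed_bound x y2"
      using 4 assms by (intro wsum_above_both_mixed_weights) auto
    finally show ?thesis
      using mixed_le2 by order
  qed
qed

abbreviation H :: "real measure" where
  "H \<equiv> product_law F G"

definition weight_bound :: "real \<Rightarrow> real \<Rightarrow> ennreal" where
  "weight_bound x y = T (x - h) y + mixed_bound x y"

lemma weight_bound_measurable [measurable]: "weight_bound x \<in> borel_measurable G"
  unfolding weight_bound_def mixed_bound_def by measurable

lemma wsum_above_le:
  assumes "0 \<le> y1" "0 \<le> y2" "0 < x"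
  shows "emeasure (F \<Otimes>\<^sub>M F) (wsum_above x y1 y2) \<le> weight_bound x y1 + weight_bound x y2
    + ennreal C * T x y1 * indicator {L<..} y2 + ennreal C * T x y2 * indicator {L<..} y1"
proof -
  define U1 where "U1 = {u. 0 \<le> u \<and> x - h < u * y1} \<times> (UNIV :: real set)"
  define U2 where "U2 = (UNIV :: real set) \<times> {u. 0 \<le> u \<and> x - h < u * y2}"
  have sets: "U1 \<in> sets (F \<Otimes>\<^sub>M F)" "U2 \<in> sets (F \<Otimes>\<^sub>M F)" "wsum_above_both h x y1 y2 \<in> sets (F \<Otimes>\<^sub>M F)"
    using wsum_above_both_sets by (simp_all add: U1_def U2_def)
  have "wsum_above x y1 y2 \<subseteq> U1 \<union> U2 \<union> wsum_above_both h x y1 y2"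
    by (auto simp: wsum_above_def U1_def U2_def wsum_above_both_def)
  then have "emeasure (F \<Otimes>\<^sub>M F) (wsum_above x y1 y2) \<le> emeasure (F \<Otimes>\<^sub>M F) (U1 \<union> U2 \<union> wsum_above_both h x y1 y2)"
    using sets by (intro emeasure_mono) auto
  also have "\<dots> \<le> emeasure (F \<Otimes>\<^sub>M F) U1 + emeasure (F \<Otimes>\<^sub>M F) U2 + emeasure (F \<Otimes>\<^sub>M F) (wsum_above_both h x y1 y2)"
    using sets by (rule emeasure_Un3_le)
  also have "emeasure (F \<Otimes>\<^sub>M F) U1 = T (x - h) y1"
    by (simp add: U1_def scaled_tail_def emeasure_pair_Times_UNIV)
  also have "emeasure (F \<Otimes>\<^sub>M F) U2 = T (x - h) y2"
    by (simp add: U2_def scaled_tail_def emeasure_pair_UNIV_Times)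
  also note wsum_above_both_le[OF assms]
  finally show ?thesis
    by (simp add: weight_bound_def ac_simps)
qed

lemma tail_weight_le_product_tail:
  assumes "0 \<le> a"
  shows "emeasure G {a<..} * T x a \<le> emeasure H {x<..}"
proof -
  have "emeasure G {a<..} * T x a = (\<integral>\<^sup>+y. T x a * indicator {a<..} y \<partial>G)"
    by (subst nn_integral_cmult_indicator) (auto simp: mult.commute)
  also have "\<dots> \<le> (\<integral>\<^sup>+y. T x y \<partial>G)"
    using assms by (intro nn_integral_mono) (auto simp: indicator_def intro: scaled_tail_mono)
  finally show ?thesis
    by (simp add: emeasure_product_law_greaterThan)
qed

lemma tail_factor_le_product_tail:
  assumes "0 < b" "0 \<le> x"
  shows "emeasure G {y. x < b * y} * emeasure F {b<..} \<le> emeasure H {x<..}"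
proof -
  have "{y \<in> space G. x < b * y} \<in> sets G"
    by measurable
  then have "emeasure G {y. x < b * y} * emeasure F {b<..} = (\<integral>\<^sup>+y. emeasure F {b<..} * indicator {y. x < b * y} y \<partial>G)"
    by (subst nn_integral_cmult_indicator) (auto simp: mult.commute)
  also have "\<dots> \<le> (\<integral>\<^sup>+y. T x y \<partial>G)"
  proof (intro nn_integral_mono)
    fix y
    show "emeasure F {b<..} * indicator {y. x < b * y} y \<le> T x y"
    proof (cases "x < b * y")
      case True
      then have "0 < y"
        using assms by (smt (verit) mult_nonneg_nonpos)
      with True have "{b<..} \<subseteq> {u. 0 \<le> u \<and> x < u * y}"
        using assms by (auto intro: less_trans mult_strict_right_mono)
      then show ?thesis
        using True by (simp add: scaled_tail_def emeasure_mono)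
    qed simp
  qed
  finally show ?thesis
    by (simp add: emeasure_product_law_greaterThan)
qed

lemma weight_tail_L'_le: "T x (2 * L) * emeasure G {L'<..} \<le> ennreal e * emeasure H {x<..}"
proof -
  have "T x (2 * L) * emeasure G {L'<..} \<le> T x (2 * L) * (ennreal e * emeasure G {2 * L<..})"
    using G_tail_L' e_pos
    by (intro mult_left_mono) (simp_all add: G.emeasure_eq_measure ennreal_mult[symmetric] ennreal_leI)
  also have "\<dots> = ennreal e * (emeasure G {2 * L<..} * T x (2 * L))"
    by (simp only: ac_simps)
  also have "\<dots> \<le> ennreal e * emeasure H {x<..}"
    using cutoffs by (intro mult_left_mono tail_weight_le_product_tail) auto
  finally show ?thesis .
qed

lemma factor_tail_s_le:
  assumes "0 \<le> x"
  shows "emeasure F {s<..} * emeasure G {y. x < 2 * s0 * y} \<le> ennreal e * emeasure H {x<..}"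
proof -
  have "emeasure F {s<..} * emeasure G {y. x < 2 * s0 * y}
      \<le> ennreal e * emeasure F {2 * s0<..} * emeasure G {y. x < 2 * s0 * y}"
    using F_tail_s e_pos
    by (intro mult_right_mono) (simp_all add: emeasure_eq_measure ennreal_mult[symmetric] ennreal_leI)
  also have "\<dots> = ennreal e * (emeasure G {y. x < 2 * s0 * y} * emeasure F {2 * s0<..})"
    by (simp only: ac_simps)
  also have "\<dots> \<le> ennreal e * emeasure H {x<..}"
    using cutoffs assms by (intro mult_left_mono tail_factor_le_product_tail) auto
  finally show ?thesis .
qed

lemma cross_term_le: "ennreal C * a * emeasure G {L<..} \<le> ennreal e * a"
proof -
  have "ennreal C * emeasure G {L<..} \<le> ennreal e"
    using G_tail_L C_pos by (simp add: G.emeasure_eq_measure ennreal_mult[symmetric] ennreal_leI)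
  then show ?thesis
    by (metis mult.assoc mult.commute mult_left_mono zero_le)
qed

lemma emeasure_convolution_greaterThan_le:
  assumes "0 < x"
  shows "emeasure (H \<star> H) {x<..} \<le> 2 * emeasure H {x - h<..} + 10 * (ennreal e * emeasure H {x<..})"
proof -
  define E where "E = ennreal e * emeasure H {x<..}"
  define B1 where "B1 = T x (2 * L) * emeasure G {L'<..}"
  define B2 where "B2 = emeasure F {s<..} * emeasure G {y. x < 2 * s0 * y}"
  define B3 where "B3 = ennreal C * emeasure H {x<..} * emeasure G {L<..}"
  have T_integral: "integral\<^sup>N G (T c) = emeasure H {c<..}" for c
    by (simp add: emeasure_product_law_greaterThan)
  have "emeasure (H \<star> H) {x<..} \<le> (\<integral>\<^sup>+y1. \<integral>\<^sup>+y2. weight_bound x y1 + weight_bound x y2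
      + ennreal C * T x y1 * indicator {L<..} y2 + ennreal C * T x y2 * indicator {L<..} y1 \<partial>G \<partial>G)"
    unfolding emeasure_product_law_convolution_greaterThan
    using AE_G_nonneg
  proof (intro nn_integral_mono_AE, eventually_elim)
    case (elim y1)
    show ?case
      using AE_G_nonneg by (intro nn_integral_mono_AE) (auto elim!: eventually_mono intro!: wsum_above_le elim assms)
  qed
  also have "\<dots> = 2 * integral\<^sup>N G (weight_bound x) + 2 * B3"
    by (subst G.nn_integral_symmetric_pair) (simp_all add: nn_integral_cmult T_integral B3_def)
  also have "integral\<^sup>N G (weight_bound x) = emeasure H {x - h<..} + 2 * E + B1 + B2"
  proof -
    have "{y \<in> space G. x < 2 * s0 * y} \<in> sets G"
      by measurable
    then show ?thesis
      unfolding weight_bound_def mixed_bound_def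
      by (simp add: nn_integral_add nn_integral_cmult T_integral E_def B1_def B2_def)
  qed
  also have "2 * (emeasure H {x - h<..} + 2 * E + B1 + B2) + 2 * B3
      \<le> 2 * (emeasure H {x - h<..} + 2 * E + E + E) + 2 * E"
    using weight_tail_L'_le factor_tail_s_le[of x] cross_term_le assms
    unfolding E_def B1_def B2_def B3_def by (intro add_mono mult_left_mono order_refl) auto
  also have "\<dots> = 2 * emeasure H {x - h<..} + 10 * E"
  proof -
    have "(10 :: ennreal) = 2 * 2 + 2 + 2 + 2"
      by simp
    then show ?thesis
      by (simp only: distrib_left distrib_right mult.assoc add.assoc)
  qed
  finally show ?thesis
    unfolding E_def .
qed

lemma measure_convolution_greaterThan_le:
  assumes "0 < x"
  shows "measure (H \<star> H) {x<..} \<le> 2 * measure H {x - h<..} + e * 10 * measure H {x<..}"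
proof -
  interpret H: real_distribution H
    by (rule real_distribution_product_law)
  interpret HH: real_distribution "H \<star> H"
    by (intro real_distribution_convolution) unfold_locales
  have "ennreal (measure (H \<star> H) {x<..}) \<le> ennreal (2 * measure H {x - h<..} + e * 10 * measure H {x<..})"
    using emeasure_convolution_greaterThan_le[OF assms] e_pos
    by (simp add: H.emeasure_eq_measure HH.emeasure_eq_measure ennreal_plus ennreal_mult' ennreal_mult ac_simps)
  then show ?thesis
    using e_pos by (subst (asm) ennreal_le_iff) auto
qed

end

lemma product_cutoffs_exist:
  assumes F: "subexponential_law F" and G: "real_distribution G" "AE y in G. 0 \<le> y" and "0 < e"
  shows "\<exists>C L L' s0 s h. product_cutoffs F G e C L L' s0 s h"
proof -
  interpret F: subexponential_law F by fact
  interpret G: real_distribution G by fact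
  obtain s0 where s0: "0 < s0" "\<And>t. measure (F \<Otimes>\<^sub>M F) (both_above s0 t) \<le> e * measure F {t<..}"
    using F.both_above_le_tail[OF \<open>0 < e\<close>] by blast
  obtain C where C: "0 < C" "\<And>t. measure (F \<Otimes>\<^sub>M F) {p. t < fst p + snd p} \<le> C * measure F {t<..}"
    using F.sum_tail_le_const_tail by blast
  obtain L where L: "1 \<le> L" "measure G {L<..} < e / C"
    using G.ex_measure_greaterThan_less[of "e / C" 1] \<open>0 < e\<close> C by auto
  obtain L' where L': "L \<le> L'" "measure G {L'<..} \<le> e * measure G {2 * L<..}"
  proof (cases "measure G {2 * L<..} = 0")
    case True
    then show ?thesis
      using L G.measure_greaterThan_antimono[of "2 * L" "2 * L"] by (intro that[of "2 * L"]) auto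
  next
    case False
    then have "0 < e * measure G {2 * L<..}"
      using \<open>0 < e\<close> by (simp add: zero_less_measure_iff)
    then show ?thesis
      using G.ex_measure_greaterThan_less[of _ L] that by (meson less_imp_le)
  qed
  obtain s where s: "s0 \<le> s" "measure F {s<..} < e * measure F {2 * s0<..}"
    using F.ex_measure_greaterThan_less[of "e * measure F {2 * s0<..}" s0]
      F.measure_greaterThan_pos \<open>0 < e\<close> by auto
  have "product_cutoffs F G e C L L' s0 s (max (s * L) (s0 * L'))"
    using s0 C L L' s \<open>0 < e\<close> G(2)
    by unfold_locales (auto simp: field_simps)
  then show ?thesis
    by blast
qed

lemma product_law_convolution_greaterThan_le:
  assumes "subexponential_law F" "real_distribution G" "AE y in G. 0 \<le> y" "0 < e"
  shows "\<exists>h. \<forall>x>0. measure (product_law F G \<star> product_law F G) {x<..}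
    \<le> 2 * measure (product_law F G) {x - h<..} + e * measure (product_law F G) {x<..}"
proof -
  obtain C L L' s0 s h where "product_cutoffs F G (e / 10) C L L' s0 s h"
    using product_cutoffs_exist[OF assms(1-3), of "e / 10"] \<open>0 < e\<close> by auto
  then interpret product_cutoffs F G "e / 10" C L L' s0 s h .
  show ?thesis
    using measure_convolution_greaterThan_le by auto
qed

theorem mainTheorem2:
  fixes M :: "'a measure" and X Y :: "'a \<Rightarrow> real"
  assumes "prob_space M"
    and "X \<in> borel_measurable M" and "Y \<in> borel_measurable M"
    and "prob_space.indep_var M borel X borel Y"
    and "AE \<omega> in M. X \<omega> \<ge> 0" and "AE \<omega> in M. Y \<omega> \<ge> 0"
    and "distr M borel Y \<noteq> return borel 0"
    and "subexponential (distr M borel X)"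
    and "long_tailed (distr M borel (\<lambda>\<omega>. X \<omega> * Y \<omega>))"
  shows "subexponential (distr M borel (\<lambda>\<omega>. X \<omega> * Y \<omega>))"
proof -
  interpret M: prob_space M by fact
  note [measurable] = assms(2,3)
  define F where "F = distr M borel X"
  define G where "G = distr M borel Y"
  have F: "subexponential_law F"
    using assms(8) by unfold_locales (simp add: F_def)
  have G: "real_distribution G" "AE y in G. 0 \<le> y"
    unfolding G_def using assms(6) by (auto simp: AE_distr_iff)
  have product: "distr M borel (\<lambda>\<omega>. X \<omega> * Y \<omega>) = product_law F G"
    using assms(4) M.indep_var_distribution_eq[of borel X borel Y]
    by (simp add: product_law_def F_def G_def distr_distr comp_def)
  have "AE a in distr M borel (\<lambda>\<omega>. X \<omega> * Y \<omega>). 0 \<le> a"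
    using assms(5,6) by (subst AE_distr_iff) auto
  then show ?thesis
    using long_tailed_subexponentialI[OF assms(9)] product_law_convolution_greaterThan_le[OF F G]
    unfolding product by blast
qed

end
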